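(* Let $M,B,\sigma>0$ and $\mu>0$, and let $X$ be the cumulative distribution function of the normal distribution with mean $\mu$ and variance $\sigma^2$. The map $p\mapsto \frac{MB(1-X(p))}{p}$ is a strictly decreasing bijection from $(0,\infty)$ onto $(0,\infty)$; let $y:(0,\infty)\to(0,\infty)$ denote its inverse, so that $D=MB(1-X(y(D)))/y(D)$. Then the function $F(D)=y(D)\,D$ is concave on $D>0$.
   Context: $F(D)=y(D)D$ is the advertising revenue of a content provider when user demand is $D$: $M$ advertisers with budget $B$ and normally distributed valuations $v$ per attention demand $MB(1-X(p^a))/p^a$ attentions at price $p^a$, and the provider sets the price $p^a=y(D)$ at which this equals $D$. *)

theory Defs
  imports "HOL-Probability.Probability"
begin

text \<open>Cumulative distribution function of the normal distribution with mean mu and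
  standard deviation s (variance s squared).\<close>
definition normal_cdf :: "real \<Rightarrow> real \<Rightarrow> real \<Rightarrow> real" where
  "normal_cdf mu s = cdf (density lborel (normal_density mu s))"

definition ad_demand :: "real \<Rightarrow> real \<Rightarrow> real \<Rightarrow> real \<Rightarrow> real \<Rightarrow> real" where
  "ad_demand M B mu s p = M * B * (1 - normal_cdf mu s p) / p"

end

theory Submission
  imports Defs "HOL-Complex_Analysis.Conformal_Mappings"
begin

text \<open>Write \<open>g\<close> for the demand and \<open>R = (1 - X) / X'\<close> for the Mills ratio of the normal law.
  Since \<open>F (g p) = p g p\<close>, the inverse function rule gives \<open>F' D = p\<^sup>2 / (p + R p)\<close> at
  \<open>p = y D\<close>. The Mills inequality \<open>(p - \<mu>) (1 - X p) < \<sigma>\<^sup>2 X' p\<close> makes \<open>R\<close> strictly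
  decreasing, so \<open>p\<^sup>2 / (p + R p)\<close> is increasing in \<open>p\<close>; as \<open>y\<close> is decreasing, \<open>F'\<close> is
  nonincreasing and \<open>F\<close> is concave.\<close>

lemma concave_on_realI:
  assumes "connected A"
    and "\<And>x. x \<in> A \<Longrightarrow> (f has_real_derivative f' x) (at x)"
    and "\<And>x y. x \<in> A \<Longrightarrow> y \<in> A \<Longrightarrow> x \<le> y \<Longrightarrow> f' y \<le> f' x"
  shows "concave_on A f"
  unfolding concave_on_def
  by (rule convex_on_realI[where f' = "\<lambda>x. - f' x"]) (use assms in \<open>auto intro: DERIV_minus\<close>)

lemma cdf_density_has_real_derivative:
  fixes f :: "real \<Rightarrow> real"
  assumes nonneg: "\<And>t. 0 \<le> f t" and int: "integrable lborel f" and cont: "continuous_on UNIV f"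
  shows "(cdf (density lborel f) has_real_derivative f x) (at x)"
proof -
  let ?M = "density lborel f"
  have "finite_measure ?M"
    using int nonneg by (intro finite_measureI) (simp add: emeasure_density nn_integral_eq_integral)
  then interpret finite_borel_measure ?M
    by (simp add: finite_borel_measure_def finite_borel_measure_axioms_def)
  have increment: "cdf ?M t = cdf ?M a + integral {a..t} f" if "a < t" for a t
  proof -
    have Icc: "(f has_integral integral {a..t} f) {a..t}"
      using cont by (intro integrable_integral integrable_continuous_real) (auto intro: continuous_on_subset)
    moreover have "negligible {u \<in> {a..t} - {a<..t}. f u \<noteq> 0}"
      by (rule negligible_subset[of "{a}"]) auto
    moreover have "{u \<in> {a<..t} - {a..t}. f u \<noteq> 0} = {}"
      by auto
    ultimately have "(f has_integral integral {a..t} f) {a<..t}"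
      using has_integral_spike_set_eq[of "{a..t}" "{a<..t}" f] by (simp only: negligible_empty)
    then have "(\<integral>\<^sup>+u. ennreal (f u) * indicator {a<..t} u \<partial>lborel) = integral {a..t} f"
      using nonneg by (rule nn_integral_has_integral_lebesgue'[rotated])
    then have "emeasure ?M {a<..t} = ennreal (integral {a..t} f)"
      using borel_measurable_integrable[OF int] by (subst emeasure_density) auto
    moreover have "0 \<le> integral {a..t} f"
      using Icc nonneg by (rule has_integral_nonneg)
    ultimately have "measure ?M {a<..t} = integral {a..t} f"
      by (simp add: measure_def)
    with cdf_diff_eq[OF that] show ?thesis by simp
  qed
  have "((\<lambda>t. cdf ?M (x - 1) + integral {x - 1..t} f) has_real_derivative f x) (at x)"
    using integral_has_real_derivative[OF continuous_on_subset[OF cont], of "x - 1" "x + 1" x]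
      at_within_Icc_at[of "x - 1" x "x + 1"]
    by (auto intro!: derivative_eq_intros)
  then show ?thesis
    by (rule has_field_derivative_transform_within_open[of _ _ _ "{x - 1<..}"]) (auto simp: increment)
qed

definition normal_mills_ratio :: "real \<Rightarrow> real \<Rightarrow> real \<Rightarrow> real" where
  "normal_mills_ratio mu s p = (1 - normal_cdf mu s p) / normal_density mu s p"

definition marginal_ad_revenue :: "real \<Rightarrow> real \<Rightarrow> real \<Rightarrow> real" where
  "marginal_ad_revenue mu s p = p\<^sup>2 / (p + normal_mills_ratio mu s p)"

context
  fixes mu s :: real
  assumes s_pos: "0 < s"
begin

lemma normal_density_has_real_derivative [derivative_intros]:
  "(normal_density mu s has_real_derivative - (x - mu) / s\<^sup>2 * normal_density mu s x) (at x)"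
proof -
  have "((\<lambda>x. exp (- (x - mu)\<^sup>2 / (2 * s\<^sup>2))) has_real_derivative
      exp (- (x - mu)\<^sup>2 / (2 * s\<^sup>2)) * (- (x - mu) / s\<^sup>2)) (at x)"
    using s_pos by (auto intro!: derivative_eq_intros simp: field_simps power2_eq_square)
  from DERIV_cmult[OF this, of "1 / sqrt (2 * pi * s\<^sup>2)"] show ?thesis
    unfolding normal_density_def[abs_def] by (simp add: field_simps)
qed

lemma normal_cdf_has_real_derivative [derivative_intros]:
  "(normal_cdf mu s has_real_derivative normal_density mu s x) (at x)"
  unfolding normal_cdf_def
proof (rule cdf_density_has_real_derivative)
  show "continuous_on UNIV (normal_density mu s)"
    unfolding normal_density_def using s_pos by (intro continuous_intros) auto
  show "integrable lborel (normal_density mu s)"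
    using s_pos by (rule integrable_normal_density)
qed simp

lemma strict_mono_normal_cdf: "strict_mono (normal_cdf mu s)"
proof (rule strict_monoI)
  fix x y :: real
  assume "x < y"
  then show "normal_cdf mu s x < normal_cdf mu s y"
  proof (rule DERIV_pos_imp_increasing)
    fix z
    show "\<exists>d. (normal_cdf mu s has_real_derivative d) (at z) \<and> 0 < d"
      using normal_cdf_has_real_derivative normal_density_pos[OF s_pos] by blast
  qed
qed

lemma real_distribution_normal: "real_distribution (density lborel (normal_density mu s))"
  by (simp add: real_distribution_def real_distribution_axioms_def prob_space_normal_density s_pos)

lemma normal_cdf_tendsto_at_top: "(normal_cdf mu s \<longlongrightarrow> 1) at_top"
  unfolding normal_cdf_def by (rule real_distribution.cdf_lim_at_top_prob[OF real_distribution_normal])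

lemma normal_cdf_nonneg: "0 \<le> normal_cdf mu s x"
  unfolding normal_cdf_def
  by (rule finite_borel_measure.cdf_nonneg[OF
        real_distribution.finite_borel_measure_M[OF real_distribution_normal]])

lemma normal_cdf_less_one: "normal_cdf mu s x < 1"
proof -
  have "normal_cdf mu s x < normal_cdf mu s (x + 1)"
    using strict_mono_normal_cdf by (simp add: strict_mono_def)
  also have "\<dots> \<le> 1"
    unfolding normal_cdf_def by (rule real_distribution.cdf_bounded_prob[OF real_distribution_normal])
  finally show ?thesis .
qed

lemma normal_density_le_mode: "normal_density mu s x \<le> normal_density mu s mu"
  unfolding normal_density_def using s_pos by (auto intro!: divide_right_mono)

lemma normal_mills_inequality:
  "(p - mu) * (1 - normal_cdf mu s p) < s\<^sup>2 * normal_density mu s p"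
proof (cases "p \<le> mu")
  case True
  then have "(p - mu) * (1 - normal_cdf mu s p) \<le> 0"
    using normal_cdf_less_one[of p] by (intro mult_nonpos_nonneg) auto
  moreover have "0 < s\<^sup>2 * normal_density mu s p"
    using s_pos normal_density_pos[OF s_pos] by simp
  ultimately show ?thesis by linarith
next
  case False
  txt \<open>\<open>k\<close> decreases to its limit \<open>0\<close> at infinity, hence is positive.\<close>
  define k where "k q = s\<^sup>2 * normal_density mu s q / (q - mu) - (1 - normal_cdf mu s q)" for q
  have "0 < k p"
  proof (rule DERIV_neg_imp_decreasing_at_top[where f = k])
    fix q
    assume "p \<le> q"
    with False have "q - mu \<noteq> 0" by simp
    have slope: "(s\<^sup>2 * (- w / s\<^sup>2 * a) * w - s\<^sup>2 * a * (1 - 0)) / (w * w) - (0 - a) = - s\<^sup>2 * a / w\<^sup>2"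
      if "w \<noteq> 0" for w a :: real
      using that s_pos by (simp add: field_simps power2_eq_square)
    have "(k has_real_derivative
        (s\<^sup>2 * (- (q - mu) / s\<^sup>2 * normal_density mu s q) * (q - mu) - s\<^sup>2 * normal_density mu s q * (1 - 0))
          / ((q - mu) * (q - mu)) - (0 - normal_density mu s q)) (at q)"
      unfolding k_def[abs_def] using \<open>q - mu \<noteq> 0\<close>
      by (intro DERIV_diff DERIV_divide DERIV_cmult normal_density_has_real_derivative
          normal_cdf_has_real_derivative DERIV_const DERIV_ident)
    then have "(k has_real_derivative - s\<^sup>2 * normal_density mu s q / (q - mu)\<^sup>2) (at q)"
      unfolding slope[OF \<open>q - mu \<noteq> 0\<close>] .
    moreover have "- s\<^sup>2 * normal_density mu s q / (q - mu)\<^sup>2 < 0"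
      using s_pos normal_density_pos[OF s_pos] \<open>q - mu \<noteq> 0\<close>
      by (intro divide_neg_pos mult_neg_pos) auto
    ultimately show "\<exists>d. (k has_real_derivative d) (at q) \<and> d < 0"
      by (intro exI conjI)
  next
    have "filterlim (\<lambda>q. q - mu) at_top at_top"
      using filterlim_tendsto_add_at_top[OF tendsto_const[of "- mu"] filterlim_ident] by simp
    then have bound: "((\<lambda>q. s\<^sup>2 * normal_density mu s mu / (q - mu)) \<longlongrightarrow> 0) at_top"
      by (intro tendsto_divide_0[OF tendsto_const] filterlim_at_top_imp_at_infinity)
    have upper: "\<forall>\<^sub>F q in at_top.
        s\<^sup>2 * normal_density mu s q / (q - mu) \<le> s\<^sup>2 * normal_density mu s mu / (q - mu)"
      using eventually_gt_at_top[of mu]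
      by eventually_elim (auto intro!: divide_right_mono mult_left_mono normal_density_le_mode)
    have lower: "\<forall>\<^sub>F q in at_top. 0 \<le> s\<^sup>2 * normal_density mu s q / (q - mu)"
      using eventually_gt_at_top[of mu] by eventually_elim simp
    have "((\<lambda>q. s\<^sup>2 * normal_density mu s q / (q - mu)) \<longlongrightarrow> 0) at_top"
      by (rule tendsto_sandwich[OF lower upper tendsto_const bound])
    from tendsto_diff[OF this tendsto_diff[OF tendsto_const[of 1] normal_cdf_tendsto_at_top]]
    show "(k \<longlongrightarrow> 0) at_top"
      unfolding k_def by simp
  qed
  with False s_pos show ?thesis
    unfolding k_def by (simp add: field_simps)
qed

lemma normal_mills_ratio_pos: "0 < normal_mills_ratio mu s x"
  unfolding normal_mills_ratio_def
  using normal_cdf_less_one normal_density_pos[OF s_pos] by simp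

lemma normal_mills_ratio_has_real_derivative:
  "(normal_mills_ratio mu s has_real_derivative (x - mu) / s\<^sup>2 * normal_mills_ratio mu s x - 1) (at x)"
  unfolding normal_mills_ratio_def[abs_def]
  using s_pos normal_density_pos[OF s_pos, of mu x]
  by (auto intro!: derivative_eq_intros simp: field_simps power2_eq_square)

lemma normal_mills_ratio_strict_antimono:
  assumes "p < q"
  shows "normal_mills_ratio mu s q < normal_mills_ratio mu s p"
proof (rule DERIV_neg_imp_decreasing[OF assms])
  fix x
  have "(x - mu) * (1 - normal_cdf mu s x) / normal_density mu s x < s\<^sup>2"
    using normal_mills_inequality[of x] normal_density_pos[OF s_pos, of mu x]
    by (simp add: pos_divide_less_eq)
  then have "(x - mu) / s\<^sup>2 * normal_mills_ratio mu s x - 1 < 0"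
    using s_pos normal_density_pos[OF s_pos, of mu x]
    by (simp add: normal_mills_ratio_def field_simps)
  with normal_mills_ratio_has_real_derivative
  show "\<exists>d. (normal_mills_ratio mu s has_real_derivative d) (at x) \<and> d < 0"
    by blast
qed

lemma marginal_ad_revenue_strict_mono:
  assumes "0 < p" and "p < q"
  shows "marginal_ad_revenue mu s p < marginal_ad_revenue mu s q"
proof -
  let ?R = "normal_mills_ratio mu s"
  have "p\<^sup>2 * ?R q \<le> q\<^sup>2 * ?R q"
    using assms normal_mills_ratio_pos[of q] by (intro mult_right_mono power_mono) auto
  also have "\<dots> < q\<^sup>2 * ?R p"
    using assms normal_mills_ratio_strict_antimono by simp
  finally have "p\<^sup>2 * ?R q < q\<^sup>2 * ?R p" .
  moreover have "p\<^sup>2 * q < q\<^sup>2 * p"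
    using assms by (simp add: power2_eq_square mult_strict_left_mono)
  ultimately have "p\<^sup>2 * (q + ?R q) < q\<^sup>2 * (p + ?R p)"
    by (simp add: algebra_simps)
  moreover have "0 < p + ?R p" "0 < q + ?R q"
    using assms normal_mills_ratio_pos by (auto intro: add_pos_pos)
  ultimately show ?thesis
    unfolding marginal_ad_revenue_def by (simp add: divide_simps)
qed

end

context
  fixes M B mu s :: real
  assumes M_pos: "0 < M" and B_pos: "0 < B" and s_pos: "0 < s"
begin

lemma ad_demand_pos: "0 < p \<Longrightarrow> 0 < ad_demand M B mu s p"
  unfolding ad_demand_def using M_pos B_pos normal_cdf_less_one[OF s_pos] by simp

lemma ad_demand_strict_antimono:
  assumes "0 < p" and "p < q"
  shows "ad_demand M B mu s q < ad_demand M B mu s p"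
proof -
  have "M * B * (1 - normal_cdf mu s q) / q < M * B * (1 - normal_cdf mu s p) / q"
    using assms M_pos B_pos strict_mono_normal_cdf[OF s_pos]
    by (intro divide_strict_right_mono mult_strict_left_mono) (auto simp: strict_mono_def)
  also have "\<dots> < M * B * (1 - normal_cdf mu s p) / p"
    using assms M_pos B_pos normal_cdf_less_one[OF s_pos] by (intro divide_strict_left_mono) auto
  finally show ?thesis
    unfolding ad_demand_def .
qed

lemma ad_demand_has_real_derivative:
  assumes "0 < p"
  shows "(ad_demand M B mu s has_real_derivative
      - (M * B * normal_density mu s p * (p + normal_mills_ratio mu s p)) / p\<^sup>2) (at p)"
  unfolding ad_demand_def[abs_def] normal_mills_ratio_def
  using assms s_pos normal_density_pos[OF s_pos, of mu p]
  by (auto intro!: derivative_eq_intros simp: field_simps power2_eq_square)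

lemma continuous_on_ad_demand: "continuous_on {0<..} (ad_demand M B mu s)"
  by (rule continuous_at_imp_continuous_on)
     (auto intro: DERIV_isCont ad_demand_has_real_derivative)

lemma inj_on_ad_demand: "inj_on (ad_demand M B mu s) {0<..}"
  by (rule linorder_inj_onI') (use ad_demand_strict_antimono in fastforce)

lemma ad_demand_image: "ad_demand M B mu s ` {0<..} = {0<..}"
proof
  show "ad_demand M B mu s ` {0<..} \<subseteq> {0<..}"
    using ad_demand_pos by auto
next
  show "{0<..} \<subseteq> ad_demand M B mu s ` {0<..}"
  proof
    fix D :: real
    assume "D \<in> {0<..}"
    then have "0 < D" by simp
    define c where "c = M * B * (1 - normal_cdf mu s 1)"
    have "0 < c"
      unfolding c_def using M_pos B_pos normal_cdf_less_one[OF s_pos] by simp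
    define p where "p = min 1 (c / D)"
    define q where "q = max p (M * B / D)"
    have "0 < p" "p \<le> 1" "p \<le> c / D" "p \<le> q" "M * B / D \<le> q"
      using \<open>0 < c\<close> \<open>0 < D\<close> unfolding p_def q_def by auto
    have "D \<le> c / p"
      using \<open>0 < p\<close> \<open>p \<le> c / D\<close> \<open>0 < D\<close> by (simp add: field_simps)
    also have "c / p \<le> ad_demand M B mu s p"
      unfolding c_def ad_demand_def
      using \<open>0 < p\<close> \<open>p \<le> 1\<close> M_pos B_pos strict_mono_normal_cdf[OF s_pos]
      by (intro divide_right_mono mult_left_mono) (auto simp: strict_mono_less_eq)
    finally have "D \<le> ad_demand M B mu s p" .
    have "ad_demand M B mu s q \<le> M * B / q"
      unfolding ad_demand_def using \<open>0 < p\<close> \<open>p \<le> q\<close> M_pos B_pos normal_cdf_nonneg[OF s_pos]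
      by (intro divide_right_mono mult_left_le) auto
    also have "M * B / q \<le> D"
      using \<open>M * B / D \<le> q\<close> \<open>0 < D\<close> \<open>0 < p\<close> \<open>p \<le> q\<close> by (simp add: field_simps)
    finally have "ad_demand M B mu s q \<le> D" .
    moreover have "continuous_on {p..q} (ad_demand M B mu s)"
      using \<open>0 < p\<close> by (intro continuous_on_subset[OF continuous_on_ad_demand]) auto
    ultimately obtain x where "p \<le> x" "ad_demand M B mu s x = D"
      using IVT2'[of "ad_demand M B mu s" q D p] \<open>D \<le> ad_demand M B mu s p\<close> \<open>p \<le> q\<close> by blast
    with \<open>0 < p\<close> show "D \<in> ad_demand M B mu s ` {0<..}"
      by force
  qed
qed

lemma inv_into_ad_demand:
  assumes "0 < D"
  shows "0 < inv_into {0<..} (ad_demand M B mu s) D"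
    and "ad_demand M B mu s (inv_into {0<..} (ad_demand M B mu s) D) = D"
  using assms ad_demand_image inv_into_into[of D "ad_demand M B mu s" "{0<..}"]
    f_inv_into_f[of D "ad_demand M B mu s" "{0<..}"]
  by auto

lemma inv_into_ad_demand_antimono:
  assumes "0 < D" and "D \<le> E"
  shows "inv_into {0<..} (ad_demand M B mu s) E \<le> inv_into {0<..} (ad_demand M B mu s) D"
  using assms ad_demand_strict_antimono[of "inv_into {0<..} (ad_demand M B mu s) D"]
    inv_into_ad_demand[of D] inv_into_ad_demand[of E]
  by (metis not_le order.strict_trans1 less_irrefl)

lemma ad_revenue_has_real_derivative:
  assumes "0 < D"
  shows "((\<lambda>D. inv_into {0<..} (ad_demand M B mu s) D * D) has_real_derivative
      marginal_ad_revenue mu s (inv_into {0<..} (ad_demand M B mu s) D)) (at D)"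
proof -
  let ?g = "ad_demand M B mu s" and ?y = "inv_into {0<..} (ad_demand M B mu s)"
  define p where "p = ?y D"
  let ?R = "normal_mills_ratio mu s p" and ?\<phi> = "normal_density mu s p"
  have "0 < p" and D: "D = ?g p"
    using inv_into_ad_demand[OF assms] unfolding p_def by auto
  have "0 < ?\<phi>" "0 < ?R"
    using normal_density_pos[OF s_pos] normal_mills_ratio_pos[OF s_pos] by auto
  define c where "c = M * B * ?\<phi>"
  have "0 < c"
    unfolding c_def using \<open>0 < ?\<phi>\<close> M_pos B_pos by simp
  have "(?g has_real_derivative - (c * (p + ?R)) / p\<^sup>2) (at p)"
    unfolding c_def by (rule ad_demand_has_real_derivative[OF \<open>0 < p\<close>])
  moreover have "- (c * (p + ?R)) / p\<^sup>2 \<noteq> 0"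
    using \<open>0 < p\<close> \<open>0 < c\<close> \<open>0 < ?R\<close> by simp
  ultimately have "(?y has_real_derivative inverse (- (c * (p + ?R)) / p\<^sup>2)) (at (?g p))"
    using \<open>0 < p\<close> continuous_on_ad_demand inv_into_f_f[OF inj_on_ad_demand]
    by (intro has_field_derivative_inverse_strong[where S = "{0<..}"]) auto
  then have deriv: "((\<lambda>D. ?y D * D) has_real_derivative
      inverse (- (c * (p + ?R)) / p\<^sup>2) * ?g p + 1 * ?y (?g p)) (at (?g p))"
    by (rule DERIV_mult[OF _ DERIV_ident])
  have slope: "inverse (- (c * (p + ?R)) / p\<^sup>2) * ?g p + 1 * ?y (?g p) = marginal_ad_revenue mu s p"
  proof -
    have "?g p = c * ?R / p"
      unfolding c_def using \<open>0 < ?\<phi>\<close> by (simp add: ad_demand_def normal_mills_ratio_def)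
    moreover have "?y (?g p) = p"
      using \<open>0 < p\<close> inv_into_f_f[OF inj_on_ad_demand] by simp
    moreover have "inverse (- (c * (p + ?R)) / p\<^sup>2) * (c * ?R / p) + 1 * p = p\<^sup>2 / (p + ?R)"
      using \<open>0 < p\<close> \<open>0 < c\<close> \<open>0 < ?R\<close>
      by (simp add: inverse_eq_divide divide_simps power2_eq_square) (simp add: algebra_simps)
    ultimately show ?thesis
      unfolding marginal_ad_revenue_def by simp
  qed
  from deriv[unfolded slope, folded D] show ?thesis
    unfolding p_def .
qed

end

theorem lemma7:
  fixes M B s mu :: real
  assumes "M > 0" and "B > 0" and "s > 0" and "mu > 0"
  defines "g \<equiv> ad_demand M B mu s"
  defines "y \<equiv> inv_into {0<..} g"
  shows "(\<forall>p\<in>{0<..}. \<forall>q\<in>{0<..}. p < q \<longrightarrow> g q < g p)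
       \<and> bij_betw g {0<..} {0<..}
       \<and> concave_on {0<..} (\<lambda>D. y D * D)"
proof (intro conjI)
  note pos = assms(1-3)
  show "\<forall>p\<in>{0<..}. \<forall>q\<in>{0<..}. p < q \<longrightarrow> g q < g p"
    unfolding g_def using ad_demand_strict_antimono[OF pos] by auto
  show "bij_betw g {0<..} {0<..}"
    unfolding g_def bij_betw_def using inj_on_ad_demand[OF pos] ad_demand_image[OF pos] by simp
  show "concave_on {0<..} (\<lambda>D. y D * D)"
  proof (rule concave_on_realI)
    fix D :: real
    assume "D \<in> {0<..}"
    then show "((\<lambda>D. y D * D) has_real_derivative marginal_ad_revenue mu s (y D)) (at D)"
      unfolding y_def g_def using ad_revenue_has_real_derivative[OF pos] by simp
  next
    fix D E :: real
    assume "D \<in> {0<..}" and "D \<le> E"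
    then have "y E \<le> y D" and "0 < y E"
      unfolding y_def g_def using inv_into_ad_demand_antimono[OF pos] inv_into_ad_demand(1)[OF pos]
      by auto
    then show "marginal_ad_revenue mu s (y E) \<le> marginal_ad_revenue mu s (y D)"
      using marginal_ad_revenue_strict_mono[OF pos(3)] by (cases "y E = y D") (auto intro: less_imp_le)
  qed simp
qed

end
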